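(* For integers $N\ge 1$ and $n\ge 1$, $$B_{N,n}=n!\sum_{k=1}^{n}\binom{n+1}{k+1}\sum_{\substack{i_1+\cdots+i_k=n\\ i_1,\dots,i_k\ge 0}}\frac{(-N!)^k}{(N+i_1)!\cdots(N+i_k)!},$$ where the inner sum runs over all $k$-tuples of nonnegative integers $(i_1,\dots,i_k)$ with sum $n$.
   Context: For a positive integer $N$, the hypergeometric Bernoulli numbers $B_{N,n}$ ($n\ge 0$) are defined by $$\frac{x^N/N!}{e^x-\sum_{n=0}^{N-1}x^n/n!}=\sum_{n=0}^\infty B_{N,n}\frac{x^n}{n!}.$$ *)

theory Defs
  imports "HOL-Computational_Algebra.Formal_Power_Series"
begin

definition hyp_bernoulli_fps :: "nat \<Rightarrow> real fps" where
  "hyp_bernoulli_fps N =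
     (fps_const (1 / fact N) * fps_X ^ N) /
     (fps_exp 1 - (\<Sum>n<N. fps_const (1 / fact n) * fps_X ^ n))"

definition hyp_bernoulli :: "nat \<Rightarrow> nat \<Rightarrow> real" where
  "hyp_bernoulli N n = fact n * fps_nth (hyp_bernoulli_fps N) n"

end

theory Submission
  imports Defs
begin

unbundle fps_syntax

text \<open>With \<open>H = \<Sum>\<^sub>m N!/(N+m)! x\<^sup>m\<close> the denominator of the generating function is
  \<open>x\<^sup>N H / N!\<close>, so the generating function is \<open>1/H\<close>. Since \<open>H\<close> has constant term 1, the
  coefficient of \<open>x\<^sup>n\<close> in \<open>1/H\<close> agrees with that of the truncated geometric series
  \<open>\<Sum>\<^sub>k\<^sub>\<le>\<^sub>n (1-H)\<^sup>k = \<Sum>\<^sub>k\<^sub>\<le>\<^sub>n C(n+1,k+1) (-H)\<^sup>k\<close>, and the coefficient of \<open>x\<^sup>n\<close> in \<open>H\<^sup>k\<close> is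
  the sum over weak compositions of \<open>n\<close> into \<open>k\<close> parts.\<close>

definition weak_compositions :: "nat \<Rightarrow> nat \<Rightarrow> (nat \<Rightarrow> nat) set" where
  "weak_compositions k n = {i. (\<forall>j. j \<notin> {1..k} \<longrightarrow> i j = 0) \<and> (\<Sum>j = 1..k. i j) = n}"

lemma sum_power_one_minus_eq_binomial:
  fixes y :: "'a::comm_ring_1"
  shows "(\<Sum>k\<le>n. (1 - y) ^ k) = (\<Sum>j\<le>n. of_nat (Suc n choose Suc j) * (- y) ^ j)"
proof -
  have "(1 - y) ^ k = (\<Sum>j\<le>n. of_nat (k choose j) * (- y) ^ j)" if "k \<le> n" for k
  proof -
    have "(1 - y) ^ k = (\<Sum>j\<le>k. of_nat (k choose j) * (- y) ^ j)"
      using binomial_ring[of "- y" 1 k] by simp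
    also have "\<dots> = (\<Sum>j\<le>n. of_nat (k choose j) * (- y) ^ j)"
      using that by (intro sum.mono_neutral_left) (auto simp: binomial_eq_0)
    finally show ?thesis .
  qed
  then have "(\<Sum>k\<le>n. (1 - y) ^ k) = (\<Sum>k\<le>n. \<Sum>j\<le>n. of_nat (k choose j) * (- y) ^ j)"
    by simp
  also have "\<dots> = (\<Sum>j\<le>n. of_nat (\<Sum>k\<le>n. k choose j) * (- y) ^ j)"
    by (subst sum.swap) (simp add: sum_distrib_right)
  also have "\<dots> = (\<Sum>j\<le>n. of_nat (Suc n choose Suc j) * (- y) ^ j)"
    by (simp add: sum_choose_upper)
  finally show ?thesis .
qed

lemma fps_inverse_nth_eq_geometric:
  fixes h :: "'a::field fps"
  assumes "h $ 0 = 1"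
  shows "inverse h $ n = (\<Sum>k\<le>n. (1 - h) ^ k) $ n"
proof -
  define y where "y = 1 - h"
  have "y $ 0 = 0"
    using assms by (simp add: y_def)
  have low_coeffs_vanish: "(y ^ Suc n) $ m = 0" if "m \<le> n" for m
  proof (cases "y = 0")
    case False
    with \<open>y $ 0 = 0\<close> have "subdegree y \<noteq> 0"
      by (simp add: subdegree_eq_0_iff)
    then have "Suc n \<le> Suc n * subdegree y"
      using mult_le_mono2[of 1 "subdegree y" "Suc n"] by simp
    with that show ?thesis
      by (intro fps_pow_nth_below_subdegree) linarith
  qed simp
  have "h * (\<Sum>k\<le>n. y ^ k) + y ^ Suc n = 1"
    using sum_gp_basic[of y n] by (simp add: y_def)
  then have "inverse h = inverse h * (h * (\<Sum>k\<le>n. y ^ k) + y ^ Suc n)"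
    by simp
  also have "\<dots> = (\<Sum>k\<le>n. y ^ k) + inverse h * y ^ Suc n"
    using assms by (simp add: distrib_left inverse_mult_eq_1 flip: mult.assoc)
  finally have "inverse h = (\<Sum>k\<le>n. y ^ k) + inverse h * y ^ Suc n" .
  moreover have "(inverse h * y ^ Suc n) $ n = 0"
    by (simp add: fps_mult_nth low_coeffs_vanish del: power_Suc)
  ultimately show ?thesis
    unfolding y_def by (metis fps_add_nth add_0_right)
qed

lemma fps_inverse_nth_eq_binomial:
  fixes h :: "'a::field fps"
  assumes "h $ 0 = 1"
  shows "inverse h $ n = (\<Sum>k\<le>n. of_nat (Suc n choose Suc k) * (- 1) ^ k * (h ^ k) $ n)"
proof -
  have "((- h) ^ k) $ n = (- 1) ^ k * (h ^ k) $ n" for k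
  proof -
    have "(- h) ^ k = fps_const ((- 1) ^ k) * h ^ k"
      by (simp add: power_minus[of h] flip: fps_const_power fps_const_neg)
    then show ?thesis
      by simp
  qed
  then show ?thesis
    using assms by (simp add: fps_inverse_nth_eq_geometric sum_power_one_minus_eq_binomial
        fps_sum_nth mult.assoc del: binomial_Suc_Suc)
qed

lemma fps_power_nth_weak_compositions:
  fixes a :: "'a::comm_ring_1 fps"
  shows "(a ^ k) $ n = (\<Sum>i\<in>weak_compositions k n. \<Prod>j = 1..k. a $ i j)"
proof (cases k)
  case 0
  then have "weak_compositions k n = (if n = 0 then {\<lambda>_. 0} else {})"
    by (auto simp: weak_compositions_def)
  then show ?thesis
    using 0 by simp
next
  case (Suc m)
  let ?T = "weak_compositions k n"
  let ?fun = "\<lambda>v::nat list. \<lambda>j. if j \<in> {1..k} then v ! (j - 1) else 0"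
  let ?list = "\<lambda>i::nat \<Rightarrow> nat. map (\<lambda>j. i (Suc j)) [0..<k]"
  have shift_sum: "(\<Sum>j = 1..k. h j) = (\<Sum>j<k. h (Suc j))" for h :: "nat \<Rightarrow> nat"
    unfolding Suc by (simp add: sum.atLeast_Suc_atMost_Suc_shift atLeast0AtMost lessThan_Suc_atMost
        del: sum.cl_ivl_Suc)
  have shift_prod: "(\<Prod>j = 1..k. h j) = (\<Prod>j = 0..m. h (Suc j))" for h :: "nat \<Rightarrow> 'a"
    unfolding Suc by (simp add: prod.atLeast_Suc_atMost_Suc_shift del: prod.cl_ivl_Suc)
  have "(a ^ k) $ n = (\<Sum>v\<in>natpermute n (m + 1). \<Prod>j = 0..m. a $ (v ! j))"
    unfolding Suc by (rule fps_power_nth_Suc)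
  also have "\<dots> = (\<Sum>i\<in>?T. \<Prod>j = 1..k. a $ i j)"
  proof (rule sum.reindex_bij_witness[of _ ?list ?fun])
    fix v assume "v \<in> natpermute n (m + 1)"
    then have len: "length v = k" and sum_v: "sum_list v = n"
      using Suc by (auto simp: natpermute_def)
    show "?list (?fun v) = v"
      using len by (intro nth_equalityI) auto
    have "(\<Sum>j = 1..k. ?fun v j) = (\<Sum>j<k. v ! j)"
      unfolding shift_sum by simp
    then show "?fun v \<in> ?T"
      using sum_v len by (simp add: weak_compositions_def sum_list_sum_nth atLeast0LessThan)
    show "(\<Prod>j = 1..k. a $ ?fun v j) = (\<Prod>j = 0..m. a $ (v ! j))"
      unfolding shift_prod by (simp add: Suc)
  next
    fix i assume i: "i \<in> ?T"
    then show "?fun (?list i) = i"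
      by (auto simp: weak_compositions_def fun_eq_iff)
    have "sum_list (?list i) = (\<Sum>j = 1..k. i j)"
      unfolding shift_sum by (simp add: sum_list_sum_nth atLeast0LessThan)
    then show "?list i \<in> natpermute n (m + 1)"
      using i Suc by (simp add: natpermute_def weak_compositions_def)
  qed
  finally show ?thesis .
qed

lemma exp_minus_exp_taylor:
  "fps_exp (1::'a::field_char_0) - (\<Sum>m<N. fps_const (1 / fact m) * fps_X ^ m)
     = fps_X ^ N * Abs_fps (\<lambda>m. 1 / fact (N + m))"
proof -
  have taylor: "(\<Sum>j<N. fps_const (1 / fact j :: 'a) * fps_X ^ j) $ m
      = (if m < N then 1 / fact m else 0)" for m
  proof -
    have "(\<Sum>j<N. fps_const (1 / fact j :: 'a) * fps_X ^ j) $ m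
        = (\<Sum>j<N. if m = j then 1 / fact j else 0)"
      unfolding fps_sum_nth by (intro sum.cong) (simp_all add: fps_X_power_mult_right_nth)
    then show ?thesis
      by (simp add: sum.delta')
  qed
  show ?thesis
    unfolding fps_eq_iff fps_sub_nth taylor by (simp add: fps_X_power_mult_nth)
qed

lemma hyp_bernoulli_fps_eq_inverse:
  "hyp_bernoulli_fps N = inverse (Abs_fps (\<lambda>m. fact N / fact (N + m)))"
proof -
  define G :: "real fps" where "G = Abs_fps (\<lambda>m. 1 / fact (N + m))"
  have G0: "G $ 0 \<noteq> 0"
    by (simp add: G_def)
  have "hyp_bernoulli_fps N = (fps_const (1 / fact N) * fps_X ^ N) / (G * fps_X ^ N)"
    unfolding hyp_bernoulli_fps_def exp_minus_exp_taylor G_def by (simp add: mult.commute)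
  also have "\<dots> = fps_const (1 / fact N) * inverse G"
    using G0 by (simp add: fps_divide_cancel fps_divide_unit)
  also have "\<dots> = inverse (fps_const (fact N) * G)"
    by (simp add: fps_inverse_mult fps_const_inverse inverse_eq_divide)
  also have "fps_const (fact N) * G = Abs_fps (\<lambda>m. fact N / fact (N + m))"
    by (simp add: G_def fps_eq_iff)
  finally show ?thesis .
qed

theorem proposition3:
  fixes N n :: nat
  assumes "N \<ge> 1" and "n \<ge> 1"
  shows "hyp_bernoulli N n =
    fact n * (\<Sum>k = 1..n. real ((n + 1) choose (k + 1)) *
      (\<Sum>i \<in> {i :: nat \<Rightarrow> nat. (\<forall>j. j \<notin> {1..k} \<longrightarrow> i j = 0) \<and> (\<Sum>j = 1..k. i j) = n}.
         (- fact N) ^ k / (\<Prod>j = 1..k. fact (N + i j))))"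
proof -
  define H :: "real fps" where "H = Abs_fps (\<lambda>m. fact N / fact (N + m))"
  have H_power_nth: "(- 1) ^ k * (H ^ k) $ n
      = (\<Sum>i\<in>weak_compositions k n. (- fact N) ^ k / (\<Prod>j = 1..k. fact (N + i j)))" for k
    by (simp add: fps_power_nth_weak_compositions H_def sum_distrib_left prod_dividef
        power_minus[of "fact N"])
  have "hyp_bernoulli N n
      = fact n * (\<Sum>k\<le>n. real (Suc n choose Suc k) * (- 1) ^ k * (H ^ k) $ n)"
    by (simp add: hyp_bernoulli_def hyp_bernoulli_fps_eq_inverse fps_inverse_nth_eq_binomial H_def)
  also have "\<dots> = fact n * (\<Sum>k = 1..n. real (Suc n choose Suc k) * (- 1) ^ k * (H ^ k) $ n)"
    using assms(2) by (simp add: atMost_atLeast0 sum.atLeast_Suc_atMost)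
  finally show ?thesis
    by (simp add: H_power_nth mult.assoc weak_compositions_def)
qed

end
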